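(* Assume $\mathfrak g$ is semisimple. Let $w\in W$ and let $\Omega$ be a prime ideal of $\mathcal S$ such that $w.\Omega$ is prime and both $P^+\cap\mathcal V(\Omega)$ and $P^+\cap\mathcal V(w.\Omega)$ are nonempty. Then $w\in W^\lambda$, where $\lambda=\lambda_\Omega$.
   Context: $F$ is an algebraically closed field of characteristic zero; $\mathfrak g$ is a semisimple Lie algebra over $F$ with Cartan subalgebra $\mathfrak h$, root system $R$, positive system $R^+$, Weyl group $W$, $\rho=\frac12\sum_{\alpha\in R^+}\alpha$, dot action $w.\xi=w(\xi+\rho)-\rho$; $H_\alpha\in\mathfrak h$ is the coroot of $\alpha$. $\mathcal S=S(\mathfrak h)$ is identified with polynomial functions on $\mathfrak h^*$, with $(w.f)(\xi)=f(w^{-1}.\xi)$ and $w.\Omega=\{w.f:f\in\Omega\}$; $\mathcal V(\Omega)$ is the zero set. For a prime $\Omega$, $\mathbb F$ is the fraction field of $\mathcal S/\Omega$ and $\lambda_\Omega$ the $\mathbb F$-linear extension of $\mathfrak h\hookrightarrow\mathcal S\to\mathcal S/\Omega\hookrightarrow\mathbb F$. $P^+$ is the set of dominant integral weights (those $\mu$ with $\dim L(\mu)<\infty$). For $\lambda=\lambda_\Omega$: $R_\lambda=\{\alpha\in R: H_\alpha-n\in\Omega\text{ for some }n\in\mathbb Z\}$, $R^+_\lambda=R^+\cap R_\lambda$, $B_\lambda$ the simple roots of $R_\lambda$ in $R^+_\lambda$, $W^\lambda=\{w\in W:w(B_\lambda)\subseteq R^+\}$. *)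

theory Defs
  imports "HOL-Analysis.Analysis" "HOL-Computational_Algebra.Polynomial"
begin

(* h^* is modelled as 'f^'n (coordinates w.r.t. a basis), h as 'f^'n via the
   perfect pairing below: an element H of h acts on xi in h^* as  xi(H). *)

definition pairing :: "'f::comm_ring_1 ^ 'n \<Rightarrow> 'f ^ 'n \<Rightarrow> 'f" where
  "pairing xi H = (\<Sum>i\<in>UNIV. xi $ i * H $ i)"

definition algebraically_closed :: "'f::field itself \<Rightarrow> bool" where
  "algebraically_closed _ \<longleftrightarrow> (\<forall>p :: 'f poly. degree p > 0 \<longrightarrow> (\<exists>x. poly p x = 0))"

(* The root system R \<subseteq> h^* of a semisimple Lie algebra together with the coroot map
   alpha \<mapsto> H_alpha: a finite reduced crystallographic root system spanning h^*. *)
definition root_system :: "('f::field ^ 'n) set \<Rightarrow> ('f ^ 'n \<Rightarrow> 'f ^ 'n) \<Rightarrow> bool" where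
  "root_system R H \<longleftrightarrow>
     finite R \<and> 0 \<notin> R \<and>
     (\<forall>xi. \<exists>c. xi = (\<Sum>\<alpha>\<in>R. c \<alpha> *s \<alpha>)) \<and>
     (\<forall>\<alpha>\<in>R. pairing \<alpha> (H \<alpha>) = 2) \<and>
     (\<forall>\<alpha>\<in>R. \<forall>\<beta>\<in>R. \<beta> - pairing \<beta> (H \<alpha>) *s \<alpha> \<in> R) \<and>
     (\<forall>\<alpha>\<in>R. \<forall>\<beta>\<in>R. \<exists>k::int. pairing \<beta> (H \<alpha>) = of_int k) \<and>
     (\<forall>\<alpha>\<in>R. \<forall>c. c *s \<alpha> \<in> R \<longrightarrow> c = 1 \<or> c = -1)"

definition positive_system :: "('f::field ^ 'n) set \<Rightarrow> ('f ^ 'n) set \<Rightarrow> bool" where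
  "positive_system R Rp \<longleftrightarrow>
     (\<exists>\<Delta>\<subseteq>R.
        (\<forall>c. (\<Sum>\<delta>\<in>\<Delta>. c \<delta> *s \<delta>) = 0 \<longrightarrow> (\<forall>\<delta>\<in>\<Delta>. c \<delta> = 0)) \<and>
        (\<forall>\<alpha>\<in>R. \<exists>c :: 'f ^ 'n \<Rightarrow> nat.
            \<alpha> = (\<Sum>\<delta>\<in>\<Delta>. of_nat (c \<delta>) *s \<delta>) \<or> \<alpha> = - (\<Sum>\<delta>\<in>\<Delta>. of_nat (c \<delta>) *s \<delta>)) \<and>
        Rp = {\<alpha>\<in>R. \<exists>c :: 'f ^ 'n \<Rightarrow> nat. \<alpha> = (\<Sum>\<delta>\<in>\<Delta>. of_nat (c \<delta>) *s \<delta>)})"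

definition reflection :: "('f::field ^ 'n \<Rightarrow> 'f ^ 'n) \<Rightarrow> 'f ^ 'n \<Rightarrow> 'f ^ 'n \<Rightarrow> 'f ^ 'n" where
  "reflection H \<alpha> xi = xi - pairing xi (H \<alpha>) *s \<alpha>"

inductive_set weyl_group :: "('f::field ^ 'n) set \<Rightarrow> ('f ^ 'n \<Rightarrow> 'f ^ 'n) \<Rightarrow> ('f ^ 'n \<Rightarrow> 'f ^ 'n) set"
  for R H where
  weyl_id: "id \<in> weyl_group R H"
| weyl_step: "w \<in> weyl_group R H \<Longrightarrow> \<alpha> \<in> R \<Longrightarrow> reflection H \<alpha> \<circ> w \<in> weyl_group R H"

definition rho :: "('f::field ^ 'n) set \<Rightarrow> 'f ^ 'n" where
  "rho Rp = inverse 2 *s (\<Sum>\<alpha>\<in>Rp. \<alpha>)"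

definition dot :: "('f::field ^ 'n) set \<Rightarrow> ('f ^ 'n \<Rightarrow> 'f ^ 'n) \<Rightarrow> 'f ^ 'n \<Rightarrow> 'f ^ 'n" where
  "dot Rp w xi = w (xi + rho Rp) - rho Rp"

(* S = S(h), identified with the polynomial functions on h^* *)
inductive_set polyfun :: "('f::field ^ 'n \<Rightarrow> 'f) set" where
  pf_const: "(\<lambda>_. c) \<in> polyfun"
| pf_lin: "(\<lambda>xi. pairing xi H) \<in> polyfun"
| pf_add: "f \<in> polyfun \<Longrightarrow> g \<in> polyfun \<Longrightarrow> (\<lambda>xi. f xi + g xi) \<in> polyfun"
| pf_mult: "f \<in> polyfun \<Longrightarrow> g \<in> polyfun \<Longrightarrow> (\<lambda>xi. f xi * g xi) \<in> polyfun"

definition dot_fun :: "('f::field ^ 'n) set \<Rightarrow> ('f ^ 'n \<Rightarrow> 'f ^ 'n) \<Rightarrow> ('f ^ 'n \<Rightarrow> 'f) \<Rightarrow> ('f ^ 'n \<Rightarrow> 'f)" where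
  "dot_fun Rp w f = (\<lambda>xi. f (dot Rp (inv w) xi))"

definition dot_set :: "('f::field ^ 'n) set \<Rightarrow> ('f ^ 'n \<Rightarrow> 'f ^ 'n) \<Rightarrow> ('f ^ 'n \<Rightarrow> 'f) set \<Rightarrow> ('f ^ 'n \<Rightarrow> 'f) set" where
  "dot_set Rp w \<Omega> = dot_fun Rp w ` \<Omega>"

definition prime_ideal_S :: "('f::field ^ 'n \<Rightarrow> 'f) set \<Rightarrow> bool" where
  "prime_ideal_S \<Omega> \<longleftrightarrow>
     \<Omega> \<subseteq> polyfun \<and> (\<lambda>_. 0) \<in> \<Omega> \<and>
     (\<forall>f\<in>\<Omega>. \<forall>g\<in>\<Omega>. (\<lambda>xi. f xi + g xi) \<in> \<Omega>) \<and>
     (\<forall>f\<in>\<Omega>. \<forall>g\<in>polyfun. (\<lambda>xi. g xi * f xi) \<in> \<Omega>) \<and>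
     \<Omega> \<noteq> polyfun \<and>
     (\<forall>f\<in>polyfun. \<forall>g\<in>polyfun. (\<lambda>xi. f xi * g xi) \<in> \<Omega> \<longrightarrow> f \<in> \<Omega> \<or> g \<in> \<Omega>)"

definition zero_set :: "('f::field ^ 'n \<Rightarrow> 'f) set \<Rightarrow> ('f ^ 'n) set" where
  "zero_set \<Omega> = {xi. \<forall>f\<in>\<Omega>. f xi = 0}"

definition dominant_integral :: "('f::field ^ 'n) set \<Rightarrow> ('f ^ 'n \<Rightarrow> 'f ^ 'n) \<Rightarrow> ('f ^ 'n) set" where
  "dominant_integral Rp H = {\<mu>. \<forall>\<alpha>\<in>Rp. \<exists>k::nat. pairing \<mu> (H \<alpha>) = of_nat k}"

(* R_lambda for lambda = lambda_Omega:  alpha with H_alpha - n \<in> Omega for some integer n *)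
definition integral_roots :: "('f::field ^ 'n) set \<Rightarrow> ('f ^ 'n \<Rightarrow> 'f ^ 'n) \<Rightarrow> ('f ^ 'n \<Rightarrow> 'f) set \<Rightarrow> ('f ^ 'n) set" where
  "integral_roots R H \<Omega> = {\<alpha>\<in>R. \<exists>n::int. (\<lambda>xi. pairing xi (H \<alpha>) - of_int n) \<in> \<Omega>}"

definition simple_roots :: "('f::field ^ 'n) set \<Rightarrow> ('f ^ 'n) set" where
  "simple_roots P = {\<alpha>\<in>P. \<not> (\<exists>\<beta>\<in>P. \<exists>\<gamma>\<in>P. \<alpha> = \<beta> + \<gamma>)}"

definition B_lambda :: "('f::field ^ 'n) set \<Rightarrow> ('f ^ 'n) set \<Rightarrow> ('f ^ 'n \<Rightarrow> 'f ^ 'n) \<Rightarrow> ('f ^ 'n \<Rightarrow> 'f) set \<Rightarrow> ('f ^ 'n) set" where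
  "B_lambda R Rp H \<Omega> = simple_roots (Rp \<inter> integral_roots R H \<Omega>)"

definition W_lambda :: "('f::field ^ 'n) set \<Rightarrow> ('f ^ 'n) set \<Rightarrow> ('f ^ 'n \<Rightarrow> 'f ^ 'n) \<Rightarrow> ('f ^ 'n \<Rightarrow> 'f) set \<Rightarrow> ('f ^ 'n \<Rightarrow> 'f ^ 'n) set" where
  "W_lambda R Rp H \<Omega> = {w \<in> weyl_group R H. w ` B_lambda R Rp H \<Omega> \<subseteq> Rp}"

end

theory Submission
  imports Defs
begin

text \<open>
  Suppose \<alpha> \<in> R^+_\<lambda> but w\<alpha> = -\<beta> with \<beta> \<in> R^+. Pick \<mu> \<in> P^+ \<inter> V(\<Omega>) and
  \<nu> \<in> P^+ \<inter> V(w.\<Omega>), and put \<xi> = w^-1.\<nu> \<in> V(\<Omega>). Since H_\<alpha> - n \<in> \<Omega>, the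
  functional H_\<alpha> is constant on V(\<Omega>), so \<langle>\<xi> + \<rho>, H_\<alpha>\<rangle> = \<langle>\<mu> + \<rho>, H_\<alpha>\<rangle>, a
  positive rational. On the other hand, W-invariance of the pairing between
  roots and coroots gives \<langle>\<xi> + \<rho>, H_\<alpha>\<rangle> = \<langle>\<nu> + \<rho>, H_{w\<alpha>}\<rangle> = -\<langle>\<nu> + \<rho>, H_\<beta>\<rangle>,
  a negative rational. Hence w maps all of R^+_\<lambda>, in particular B_\<lambda>, into R^+.
  Positivity of \<langle>\<rho>, H_\<gamma>\<rangle> for \<gamma> \<in> R^+ comes from the identity
  \<langle>\<rho>, H_\<gamma>\<rangle> \<gamma> = \<Sum>{\<beta> \<in> R^+. s_\<gamma>\<beta> \<notin> R^+}, read in coordinates with respect to a base.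
\<close>

lemma pairing_add_left: "pairing (x + y) h = pairing x h + pairing y h"
  by (simp add: pairing_def distrib_right sum.distrib)

lemma pairing_diff_left: "pairing (x - y) h = pairing x h - pairing y h"
  by (simp add: pairing_def left_diff_distrib sum_subtractf)

lemma pairing_uminus_left: "pairing (- x) h = - pairing x h"
  by (simp add: pairing_def sum_negf)

lemma pairing_scale_left: "pairing (c *s x) h = c * pairing x h"
  by (simp add: pairing_def sum_distrib_left mult.assoc)

lemma pairing_zero_left: "pairing 0 h = 0"
  by (simp add: pairing_def)

lemma pairing_diff_right: "pairing x (a - b) = pairing x a - pairing x b"
  by (simp add: pairing_def right_diff_distrib sum_subtractf)

lemma pairing_scale_right: "pairing x (c *s h) = c * pairing x h"
  by (simp add: pairing_def sum_distrib_left mult.left_commute)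

lemma pairing_sum_left: "pairing (\<Sum>a\<in>A. f a) h = (\<Sum>a\<in>A. pairing (f a) h)"
  unfolding pairing_def by (simp add: sum_distrib_right sum.swap[of _ UNIV A])

lemma sum_vector_smult_left: "(\<Sum>x\<in>A. f x) *s (v::'a::comm_ring_1^'n) = (\<Sum>x\<in>A. f x *s v)"
  by (simp add: vec_eq_iff sum_distrib_right)

lemma finite_translation_closed_zero:
  fixes v :: "'f::field_char_0 ^ 'n"
  assumes "finite S" and "x \<in> S" and "\<And>y. y \<in> S \<Longrightarrow> y + v \<in> S"
  shows "v = 0"
proof (rule ccontr)
  assume "v \<noteq> 0"
  then have "inj (\<lambda>j::nat. x + of_nat j *s v)"
    by (auto intro: injI)
  moreover have "x + of_nat j *s v \<in> S" for j :: nat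
  proof (induction j)
    case (Suc j)
    then have "(x + of_nat j *s v) + v \<in> S"
      using assms(3) by blast
    then show ?case
      by (simp add: vector_sadd_rdistrib algebra_simps)
  qed (simp add: assms(2))
  then have "range (\<lambda>j::nat. x + of_nat j *s v) \<subseteq> S"
    by auto
  ultimately show False
    using assms(1) by (meson finite_subset infinite_UNIV_nat finite_imageD)
qed

text \<open>
  The composite of the two reflections moves each root y by (\<langle>y, \<psi>\<rangle> - \<langle>y, \<phi>\<rangle>) a
  without changing that coefficient; finiteness of R forces it to vanish.
\<close>

lemma reflection_functional_unique:
  fixes a \<phi> \<psi> :: "'f::field_char_0 ^ 'n"
  assumes fin: "finite R" and span: "\<forall>\<xi>. \<exists>c. \<xi> = (\<Sum>\<alpha>\<in>R. c \<alpha> *s \<alpha>)"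
    and a\<phi>: "pairing a \<phi> = 2" and a\<psi>: "pairing a \<psi> = 2"
    and closed\<phi>: "\<forall>\<gamma>\<in>R. \<gamma> - pairing \<gamma> \<phi> *s a \<in> R"
    and closed\<psi>: "\<forall>\<gamma>\<in>R. \<gamma> - pairing \<gamma> \<psi> *s a \<in> R"
  shows "pairing \<xi> \<phi> = pairing \<xi> \<psi>"
proof -
  define f where "f x = pairing x \<psi> - pairing x \<phi>" for x
  have f_linear: "f (x + c *s a) = f x" for x c
    using a\<phi> a\<psi> by (simp add: f_def pairing_add_left pairing_scale_left algebra_simps)
  have f_roots: "f \<gamma> = 0" if "\<gamma> \<in> R" for \<gamma>
  proof -
    define S where "S = {x\<in>R. f x = f \<gamma>}"
    have "y + f \<gamma> *s a \<in> S" if y: "y \<in> S" for y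
    proof -
      define z where "z = y - pairing y \<psi> *s a"
      have "z - pairing z \<phi> *s a = y + f y *s a"
        using a\<phi> by (simp add: z_def f_def pairing_diff_left pairing_scale_left vec_eq_iff algebra_simps)
      moreover have "z - pairing z \<phi> *s a \<in> R"
        using y closed\<phi> closed\<psi> by (simp add: z_def S_def)
      ultimately show ?thesis
        using y f_linear by (simp add: S_def)
    qed
    then have "f \<gamma> *s a = 0"
      using fin that by (intro finite_translation_closed_zero[of S \<gamma>]) (auto simp: S_def)
    moreover have "a \<noteq> 0"
      using a\<phi> by (auto simp: pairing_zero_left)
    ultimately show ?thesis
      by simp
  qed
  obtain c where c: "\<xi> = (\<Sum>\<alpha>\<in>R. c \<alpha> *s \<alpha>)"
    using span by blast
  have "f \<xi> = (\<Sum>\<alpha>\<in>R. c \<alpha> * f \<alpha>)"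
    unfolding c f_def by (simp add: pairing_sum_left pairing_scale_left sum_subtractf right_diff_distrib)
  also have "\<dots> = 0"
    using f_roots by simp
  finally show ?thesis
    by (simp add: f_def)
qed

lemma pairing_reflection:
  "pairing (reflection H \<beta> x) h = pairing x h - pairing x (H \<beta>) * pairing \<beta> h"
  by (simp add: reflection_def pairing_diff_left pairing_scale_left)

lemma reflection_diff_scale:
  "reflection H \<beta> (u - p *s v) = reflection H \<beta> u - p *s reflection H \<beta> v"
  by (simp add: reflection_def pairing_diff_left pairing_scale_left vec_eq_iff algebra_simps)

lemma reflection_uminus: "reflection H \<beta> (- x) = - reflection H \<beta> x"
  by (simp add: reflection_def pairing_uminus_left vec_eq_iff)

lemma root_coroot_pairing: "root_system R H \<Longrightarrow> \<alpha> \<in> R \<Longrightarrow> pairing \<alpha> (H \<alpha>) = 2"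
  unfolding root_system_def by blast

lemma reflection_root: "root_system R H \<Longrightarrow> \<alpha> \<in> R \<Longrightarrow> \<beta> \<in> R \<Longrightarrow> reflection H \<alpha> \<beta> \<in> R"
  unfolding root_system_def reflection_def by blast

lemma reflection_self: "root_system R H \<Longrightarrow> \<beta> \<in> R \<Longrightarrow> reflection H \<beta> \<beta> = - \<beta>"
  by (simp add: root_coroot_pairing reflection_def vec_eq_iff)

lemma reflection_involution:
  assumes "root_system R H" and "\<beta> \<in> R"
  shows "reflection H \<beta> (reflection H \<beta> x) = x"
  using root_coroot_pairing[OF assms]
  by (simp add: reflection_def pairing_diff_left pairing_scale_left vec_eq_iff algebra_simps)

lemma uminus_root: "root_system R H \<Longrightarrow> \<alpha> \<in> R \<Longrightarrow> - \<alpha> \<in> R"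
  by (metis reflection_root reflection_self)

lemma coroot_reflection:
  fixes R :: "('f::field_char_0 ^ 'n) set"
  assumes rs: "root_system R H" and \<alpha>: "\<alpha> \<in> R" and \<beta>: "\<beta> \<in> R"
  shows "pairing \<xi> (H (reflection H \<beta> \<alpha>)) = pairing (reflection H \<beta> \<xi>) (H \<alpha>)"
proof -
  let ?s = "reflection H \<beta>"
  define \<psi> where "\<psi> = H \<alpha> - pairing \<beta> (H \<alpha>) *s H \<beta>"
  have \<psi>: "pairing x \<psi> = pairing (?s x) (H \<alpha>)" for x
    by (simp add: \<psi>_def pairing_reflection pairing_diff_right pairing_scale_right algebra_simps)
  have s\<alpha>: "?s \<alpha> \<in> R"
    using reflection_root[OF rs \<beta> \<alpha>] .
  \<comment> \<open>s_\<beta> s_\<alpha> s_\<beta> is the reflection along s_\<beta> \<alpha> with functional \<psi>\<close>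
  have "\<forall>\<gamma>\<in>R. \<gamma> - pairing \<gamma> \<psi> *s ?s \<alpha> \<in> R"
  proof
    fix \<gamma> assume "\<gamma> \<in> R"
    then have "?s (reflection H \<alpha> (?s \<gamma>)) \<in> R"
      using reflection_root[OF rs] \<alpha> \<beta> by blast
    moreover have "?s (reflection H \<alpha> (?s \<gamma>)) = \<gamma> - pairing \<gamma> \<psi> *s ?s \<alpha>"
      unfolding \<psi> reflection_def[of H \<alpha>] reflection_diff_scale
      by (simp add: reflection_involution[OF rs \<beta>])
    ultimately show "\<gamma> - pairing \<gamma> \<psi> *s ?s \<alpha> \<in> R"
      by simp
  qed
  moreover have "pairing (?s \<alpha>) \<psi> = 2"
    using reflection_involution[OF rs \<beta>] root_coroot_pairing[OF rs \<alpha>] by (simp add: \<psi>)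
  moreover have "\<forall>\<gamma>\<in>R. \<gamma> - pairing \<gamma> (H (?s \<alpha>)) *s ?s \<alpha> \<in> R"
    using reflection_root[OF rs s\<alpha>] unfolding reflection_def by blast
  ultimately have "pairing \<xi> (H (?s \<alpha>)) = pairing \<xi> \<psi>"
    using rs root_coroot_pairing[OF rs s\<alpha>]
    by (intro reflection_functional_unique[of R]) (auto simp: root_system_def)
  then show ?thesis
    by (simp add: \<psi>)
qed

lemma coroot_uminus:
  fixes R :: "('f::field_char_0 ^ 'n) set"
  assumes rs: "root_system R H" and \<beta>: "\<beta> \<in> R"
  shows "pairing \<xi> (H (- \<beta>)) = - pairing \<xi> (H \<beta>)"
  using coroot_reflection[OF rs \<beta> \<beta>, of \<xi>] root_coroot_pairing[OF rs \<beta>]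
  by (simp add: reflection_self[OF rs \<beta>] pairing_reflection)

lemma weyl_group_root:
  "w \<in> weyl_group R H \<Longrightarrow> root_system R H \<Longrightarrow> \<alpha> \<in> R \<Longrightarrow> w \<alpha> \<in> R"
  by (induction rule: weyl_group.induct) (auto simp: reflection_root)

lemma weyl_group_bij: "w \<in> weyl_group R H \<Longrightarrow> root_system R H \<Longrightarrow> bij w"
proof (induction rule: weyl_group.induct)
  case weyl_id
  then show ?case
    by (simp add: bij_def inj_on_def)
next
  case (weyl_step w \<beta>)
  have "bij (reflection H \<beta>)"
    by (rule o_bij[of "reflection H \<beta>"])
      (simp_all add: fun_eq_iff reflection_involution[OF weyl_step.prems weyl_step.hyps(2)])
  then show ?case
    using weyl_step bij_comp by blast
qed

lemma weyl_group_coroot: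
  fixes R :: "('f::field_char_0 ^ 'n) set"
  shows "w \<in> weyl_group R H \<Longrightarrow> root_system R H \<Longrightarrow> \<alpha> \<in> R \<Longrightarrow>
    pairing (w \<xi>) (H (w \<alpha>)) = pairing \<xi> (H \<alpha>)"
proof (induction rule: weyl_group.induct)
  case weyl_id
  then show ?case
    by simp
next
  case (weyl_step w \<beta>)
  have "w \<alpha> \<in> R"
    using weyl_group_root weyl_step by blast
  then show ?case
    using weyl_step coroot_reflection[OF weyl_step.prems(1) \<open>w \<alpha> \<in> R\<close> weyl_step.hyps(2)]
    by (simp add: reflection_involution)
qed

lemma dot_inv_mem_zero_set:
  "\<nu> \<in> zero_set (dot_set Rp w \<Omega>) \<Longrightarrow> dot Rp (inv w) \<nu> \<in> zero_set \<Omega>"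
  by (auto simp: zero_set_def dot_set_def dot_fun_def)

lemma integral_root_pairing_zero_set:
  assumes "\<alpha> \<in> integral_roots R H \<Omega>" and "\<xi> \<in> zero_set \<Omega>" and "\<eta> \<in> zero_set \<Omega>"
  shows "pairing \<xi> (H \<alpha>) = pairing \<eta> (H \<alpha>)"
proof -
  obtain n :: int where n: "(\<lambda>x. pairing x (H \<alpha>) - of_int n) \<in> \<Omega>"
    using assms(1) by (auto simp: integral_roots_def)
  have "pairing x (H \<alpha>) = of_int n" if "x \<in> zero_set \<Omega>" for x
    using that n unfolding zero_set_def by (metis (mono_tags) eq_iff_diff_eq_0 mem_Collect_eq)
  then show ?thesis
    using assms(2,3) by simp
qed

locale based_root_system =
  fixes R Rp D :: "('f::field_char_0 ^ 'n) set" and H :: "'f ^ 'n \<Rightarrow> 'f ^ 'n"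
  assumes root_system: "root_system R H"
    and base_independent: "\<forall>c. (\<Sum>\<delta>\<in>D. c \<delta> *s \<delta>) = 0 \<longrightarrow> (\<forall>\<delta>\<in>D. c \<delta> = 0)"
    and roots_signed: "\<forall>\<alpha>\<in>R. \<exists>c :: 'f ^ 'n \<Rightarrow> nat.
            \<alpha> = (\<Sum>\<delta>\<in>D. of_nat (c \<delta>) *s \<delta>) \<or> \<alpha> = - (\<Sum>\<delta>\<in>D. of_nat (c \<delta>) *s \<delta>)"
    and positive_roots: "Rp = {\<alpha>\<in>R. \<exists>c :: 'f ^ 'n \<Rightarrow> nat. \<alpha> = (\<Sum>\<delta>\<in>D. of_nat (c \<delta>) *s \<delta>)}"
begin

lemma positive_subset: "Rp \<subseteq> R"
  using positive_roots by blast

lemma finite_positive: "finite Rp"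
  using root_system positive_subset finite_subset unfolding root_system_def by blast

lemma base_coordinates_unique:
  assumes "(\<Sum>\<delta>\<in>D. a \<delta> *s \<delta>) = (\<Sum>\<delta>\<in>D. b \<delta> *s \<delta>)" and "\<delta> \<in> D"
  shows "a \<delta> = b \<delta>"
proof -
  have "(\<Sum>\<delta>\<in>D. (a \<delta> - b \<delta>) *s \<delta>) = 0"
    using assms(1) by (simp add: vector_sub_rdistrib sum_subtractf)
  then show ?thesis
    using base_independent[rule_format, of "\<lambda>\<delta>. a \<delta> - b \<delta>"] assms(2) by simp
qed

lemma uminus_positive_notin:
  assumes "\<beta> \<in> Rp"
  shows "- \<beta> \<notin> Rp"
proof
  assume "- \<beta> \<in> Rp"
  then obtain c' :: "'f ^ 'n \<Rightarrow> nat" where c': "- \<beta> = (\<Sum>\<delta>\<in>D. of_nat (c' \<delta>) *s \<delta>)"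
    using positive_roots by blast
  obtain c :: "'f ^ 'n \<Rightarrow> nat" where c: "\<beta> = (\<Sum>\<delta>\<in>D. of_nat (c \<delta>) *s \<delta>)"
    using positive_roots assms by blast
  have coords: "(\<Sum>\<delta>\<in>D. of_nat (c \<delta>) *s \<delta>) = (\<Sum>\<delta>\<in>D. (- of_nat (c' \<delta>)) *s \<delta>)"
    unfolding vector_smult_lneg sum_negf c'[symmetric] c[symmetric] by simp
  have "(of_nat (c \<delta> + c' \<delta>) :: 'f) = 0" if "\<delta> \<in> D" for \<delta>
    using base_coordinates_unique[OF coords that] by (simp add: eq_neg_iff_add_eq_0)
  then have "c \<delta> = 0" if "\<delta> \<in> D" for \<delta>
    using that by (metis add_is_0 of_nat_eq_0_iff)
  then have "\<beta> = 0"
    using c by simp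
  then show False
    using assms positive_subset root_system unfolding root_system_def by blast
qed

lemma uminus_positive:
  assumes "\<alpha> \<in> R" and "\<alpha> \<notin> Rp"
  shows "- \<alpha> \<in> Rp"
proof -
  obtain c :: "'f ^ 'n \<Rightarrow> nat" where
    c: "\<alpha> = (\<Sum>\<delta>\<in>D. of_nat (c \<delta>) *s \<delta>) \<or> \<alpha> = - (\<Sum>\<delta>\<in>D. of_nat (c \<delta>) *s \<delta>)"
    using roots_signed assms(1) by blast
  moreover have "\<alpha> \<noteq> (\<Sum>\<delta>\<in>D. of_nat (c \<delta>) *s \<delta>)"
    using assms positive_roots by blast
  ultimately have "- \<alpha> = (\<Sum>\<delta>\<in>D. of_nat (c \<delta>) *s \<delta>)"
    by simp
  then show ?thesis
    using uminus_root[OF root_system assms(1)] positive_roots by blast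
qed

text \<open>
  s_\<gamma> fixes the sum over the positive roots it keeps positive and negates the sum
  over the others (it permutes them up to sign), while the defining formula of s_\<gamma>
  lowers \<Sum>R^+ = 2\<rho> by 2\<langle>\<rho>, H_\<gamma>\<rangle>\<gamma>.
\<close>

lemma rho_coroot_scaled:
  assumes \<gamma>: "\<gamma> \<in> Rp"
  shows "pairing (rho Rp) (H \<gamma>) *s \<gamma> = (\<Sum>\<beta>\<in>{\<beta>\<in>Rp. reflection H \<gamma> \<beta> \<notin> Rp}. \<beta>)"
proof -
  have \<gamma>R: "\<gamma> \<in> R"
    using \<gamma> positive_subset by blast
  define s where "s = reflection H \<gamma>"
  have s_inv: "s (s x) = x" for x
    unfolding s_def using reflection_involution[OF root_system \<gamma>R] .
  have s_uminus: "s (- x) = - s x" for x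
    unfolding s_def by (rule reflection_uminus)
  define A where "A = {\<beta>\<in>Rp. s \<beta> \<in> Rp}"
  define B where "B = {\<beta>\<in>Rp. s \<beta> \<notin> Rp}"
  define x where "x = pairing (rho Rp) (H \<gamma>)"
  have split: "(\<Sum>\<beta>\<in>Rp. f \<beta>) = (\<Sum>\<beta>\<in>A. f \<beta>) + (\<Sum>\<beta>\<in>B. f \<beta>)" for f :: "_ \<Rightarrow> 'f ^ 'n"
  proof -
    have "Rp = A \<union> B" "A \<inter> B = {}" "finite A" "finite B"
      using finite_positive by (auto simp: A_def B_def)
    then show ?thesis
      using sum.union_disjoint by metis
  qed
  have sum_A: "(\<Sum>\<beta>\<in>A. s \<beta>) = (\<Sum>\<beta>\<in>A. \<beta>)"
    by (rule sum.reindex_bij_witness[of _ s s]) (auto simp: A_def s_inv)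
  have B_closed: "- s \<beta> \<in> B" if \<beta>: "\<beta> \<in> B" for \<beta>
  proof -
    have "s \<beta> \<in> R" "s \<beta> \<notin> Rp" "\<beta> \<in> Rp"
      using \<beta> positive_subset reflection_root[OF root_system \<gamma>R] by (auto simp: B_def s_def)
    then have "- s \<beta> \<in> Rp" "s (- s \<beta>) \<notin> Rp"
      using uminus_positive uminus_positive_notin by (simp_all add: s_uminus s_inv)
    then show ?thesis
      by (simp add: B_def)
  qed
  have "(\<Sum>\<beta>\<in>B. - s \<beta>) = (\<Sum>\<beta>\<in>B. \<beta>)"
    by (rule sum.reindex_bij_witness[of _ "\<lambda>x. - s x" "\<lambda>x. - s x"])
      (simp_all add: B_closed s_uminus s_inv)
  then have sum_B: "(\<Sum>\<beta>\<in>B. s \<beta>) = - (\<Sum>\<beta>\<in>B. \<beta>)"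
    by (metis minus_equation_iff sum_negf)
  have "(\<Sum>\<beta>\<in>Rp. pairing \<beta> (H \<gamma>)) = 2 * x"
    by (simp add: x_def rho_def pairing_scale_left pairing_sum_left)
  then have "(\<Sum>\<beta>\<in>Rp. s \<beta>) = (\<Sum>\<beta>\<in>Rp. \<beta>) - (2 * x) *s \<gamma>"
    by (simp add: s_def reflection_def sum_subtractf sum_vector_smult_left[symmetric])
  then have "(2 * x) *s \<gamma> = (\<Sum>\<beta>\<in>B. \<beta>) + (\<Sum>\<beta>\<in>B. \<beta>)"
    using split[of s] split[of "\<lambda>\<beta>. \<beta>"] sum_A sum_B by (simp add: algebra_simps)
  then have "2 * (x * \<gamma> $ i) = 2 * (\<Sum>\<beta>\<in>B. \<beta>) $ i" for i
    by (simp add: vec_eq_iff)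
  then show ?thesis
    by (simp add: vec_eq_iff x_def B_def s_def)
qed

lemma rho_coroot_positive_rat:
  assumes \<gamma>: "\<gamma> \<in> Rp"
  shows "\<exists>q>0. pairing (rho Rp) (H \<gamma>) = of_rat q"
proof -
  define B where "B = {\<beta>\<in>Rp. reflection H \<gamma> \<beta> \<notin> Rp}"
  define x where "x = pairing (rho Rp) (H \<gamma>)"
  have "\<forall>\<beta>\<in>Rp. \<exists>c :: 'f ^ 'n \<Rightarrow> nat. \<beta> = (\<Sum>\<delta>\<in>D. of_nat (c \<delta>) *s \<delta>)"
    using positive_roots by blast
  then obtain c where c: "\<forall>\<beta>\<in>Rp. \<beta> = (\<Sum>\<delta>\<in>D. of_nat (c \<beta> \<delta>) *s \<delta>)"
    by metis
  define N where "N \<delta> = (\<Sum>\<beta>\<in>B. c \<beta> \<delta>)" for \<delta>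
  have \<gamma>R: "\<gamma> \<in> R"
    using \<gamma> positive_subset by blast
  have \<gamma>B: "\<gamma> \<in> B"
    using \<gamma> uminus_positive_notin by (simp add: B_def reflection_self[OF root_system \<gamma>R])
  have "(\<Sum>\<delta>\<in>D. of_nat (N \<delta>) *s \<delta>) = (\<Sum>\<delta>\<in>D. \<Sum>\<beta>\<in>B. of_nat (c \<beta> \<delta>) *s \<delta>)"
    by (simp add: N_def sum_vector_smult_left)
  also have "\<dots> = (\<Sum>\<beta>\<in>B. \<Sum>\<delta>\<in>D. of_nat (c \<beta> \<delta>) *s \<delta>)"
    by (rule sum.swap)
  also have "\<dots> = (\<Sum>\<beta>\<in>B. \<beta>)"
    using c by (intro sum.cong) (auto simp: B_def)
  also have "\<dots> = x *s \<gamma>"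
    using rho_coroot_scaled[OF \<gamma>] by (simp add: x_def B_def)
  also have "\<dots> = (\<Sum>\<delta>\<in>D. (x * of_nat (c \<gamma> \<delta>)) *s \<delta>)"
    using c \<gamma> by (simp add: vec_eq_iff sum_distrib_left mult.assoc)
  finally have coords_sum:
    "(\<Sum>\<delta>\<in>D. of_nat (N \<delta>) *s \<delta>) = (\<Sum>\<delta>\<in>D. (x * of_nat (c \<gamma> \<delta>)) *s \<delta>)" .
  have coords: "of_nat (N \<delta>) = x * of_nat (c \<gamma> \<delta>)" if "\<delta> \<in> D" for \<delta>
    using base_coordinates_unique[OF coords_sum that] by simp
  obtain \<delta> where \<delta>: "\<delta> \<in> D" "c \<gamma> \<delta> \<noteq> 0"
  proof (rule ccontr)
    assume "\<not> thesis"
    then have "\<gamma> = 0"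
      using that c \<gamma> by (metis (no_types, lifting) of_nat_0 sum.neutral vector_smult_lzero)
    then show False
      using \<gamma>R root_system unfolding root_system_def by blast
  qed
  have "c \<gamma> \<delta> \<le> N \<delta>"
    using \<gamma>B finite_positive member_le_sum[of \<gamma> B "\<lambda>\<beta>. c \<beta> \<delta>"] by (simp add: N_def B_def)
  with \<delta> coords show ?thesis
    by (intro exI[of _ "of_nat (N \<delta>) / of_nat (c \<gamma> \<delta>)"]) (simp add: x_def of_rat_divide field_simps)
qed

lemma dominant_rho_coroot_positive_rat:
  assumes "\<nu> \<in> dominant_integral Rp H" and "\<gamma> \<in> Rp"
  shows "\<exists>q>0. pairing (\<nu> + rho Rp) (H \<gamma>) = of_rat q"
proof -
  obtain k :: nat where "pairing \<nu> (H \<gamma>) = of_nat k"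
    using assms unfolding dominant_integral_def by blast
  moreover obtain q where "q > 0" "pairing (rho Rp) (H \<gamma>) = of_rat q"
    using rho_coroot_positive_rat[OF assms(2)] by blast
  ultimately show ?thesis
    by (intro exI[of _ "of_nat k + q"]) (simp add: pairing_add_left of_rat_add)
qed

lemma weyl_group_positive_on_integral_roots:
  assumes w: "w \<in> weyl_group R H"
    and \<mu>: "\<mu> \<in> dominant_integral Rp H \<inter> zero_set \<Omega>"
    and \<nu>: "\<nu> \<in> dominant_integral Rp H \<inter> zero_set (dot_set Rp w \<Omega>)"
    and \<alpha>: "\<alpha> \<in> Rp \<inter> integral_roots R H \<Omega>"
  shows "w \<alpha> \<in> Rp"
proof (rule ccontr)
  assume w\<alpha>: "w \<alpha> \<notin> Rp"
  have \<alpha>R: "\<alpha> \<in> R"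
    using \<alpha> positive_subset by blast
  define \<beta> where "\<beta> = - w \<alpha>"
  have w\<alpha>R: "w \<alpha> \<in> R"
    using weyl_group_root[OF w root_system \<alpha>R] .
  have \<beta>: "\<beta> \<in> Rp"
    using uminus_positive[OF w\<alpha>R w\<alpha>] by (simp add: \<beta>_def)
  define \<xi> where "\<xi> = dot Rp (inv w) \<nu>"
  have \<xi>: "\<xi> \<in> zero_set \<Omega>"
    using \<nu> dot_inv_mem_zero_set unfolding \<xi>_def by blast
  have w\<xi>: "w (\<xi> + rho Rp) = \<nu> + rho Rp"
    using weyl_group_bij[OF w root_system] by (simp add: \<xi>_def dot_def bij_is_surj surj_f_inv_f)
  obtain q\<^sub>1 where "q\<^sub>1 > 0" and q\<^sub>1: "pairing (\<mu> + rho Rp) (H \<alpha>) = of_rat q\<^sub>1"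
    using dominant_rho_coroot_positive_rat \<mu> \<alpha> by blast
  obtain q\<^sub>2 where "q\<^sub>2 > 0" and q\<^sub>2: "pairing (\<nu> + rho Rp) (H \<beta>) = of_rat q\<^sub>2"
    using dominant_rho_coroot_positive_rat \<nu> \<beta> by blast
  have "of_rat q\<^sub>1 = pairing (\<xi> + rho Rp) (H \<alpha>)"
    using integral_root_pairing_zero_set[of \<alpha> R H \<Omega> \<xi> \<mu>] \<alpha> \<xi> \<mu>
    by (simp add: q\<^sub>1[symmetric] pairing_add_left)
  also have "\<dots> = pairing (\<nu> + rho Rp) (H (w \<alpha>))"
    using weyl_group_coroot[OF w root_system \<alpha>R, of "\<xi> + rho Rp"] by (simp add: w\<xi>)
  also have "\<dots> = of_rat (- q\<^sub>2)"
    using coroot_uminus[OF root_system, of \<beta>] \<beta> positive_subset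
    by (auto simp: \<beta>_def q\<^sub>2[unfolded \<beta>_def] of_rat_minus)
  finally show False
    using \<open>q\<^sub>1 > 0\<close> \<open>q\<^sub>2 > 0\<close> by simp
qed

end

lemma positive_system_based:
  assumes "root_system R H" and "positive_system R Rp"
  obtains D where "based_root_system R Rp D H"
  using assms unfolding positive_system_def based_root_system_def by blast

theorem mainTheorem14:
  fixes R Rp :: "('f::field_char_0 ^ 'n) set"
    and H :: "'f ^ 'n \<Rightarrow> 'f ^ 'n"
    and w :: "'f ^ 'n \<Rightarrow> 'f ^ 'n"
    and \<Omega> :: "('f ^ 'n \<Rightarrow> 'f) set"
  assumes "algebraically_closed TYPE('f)"
    and "root_system R H"
    and "positive_system R Rp"
    and "w \<in> weyl_group R H"
    and "prime_ideal_S \<Omega>"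
    and "prime_ideal_S (dot_set Rp w \<Omega>)"
    and "dominant_integral Rp H \<inter> zero_set \<Omega> \<noteq> {}"
    and "dominant_integral Rp H \<inter> zero_set (dot_set Rp w \<Omega>) \<noteq> {}"
  shows "w \<in> W_lambda R Rp H \<Omega>"
proof -
  obtain D where "based_root_system R Rp D H"
    using positive_system_based assms(2,3) by blast
  then interpret based_root_system R Rp D H .
  obtain \<mu> \<nu> where "\<mu> \<in> dominant_integral Rp H \<inter> zero_set \<Omega>"
    and "\<nu> \<in> dominant_integral Rp H \<inter> zero_set (dot_set Rp w \<Omega>)"
    using assms(7,8) by blast
  then have "w \<alpha> \<in> Rp" if "\<alpha> \<in> B_lambda R Rp H \<Omega>" for \<alpha>
    using that assms(4) weyl_group_positive_on_integral_roots
    by (auto simp: B_lambda_def simple_roots_def)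
  then show ?thesis
    using assms(4) by (auto simp: W_lambda_def)
qed

end
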